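(* Let $\lambda>0$ and let $\lambda_1,\dots,\lambda_M>0$. (i) For each $p\ge 0$, the equation $$t=\sum_{\rho=1}^M\Big(\frac{1}{\lambda_\rho}+\frac{p}{\lambda+t}\Big)^{-1}$$ has a unique solution $t(p)\in(0,\infty)$, and $p\mapsto t(p)$ is differentiable. (ii) With $\gamma(p)=\sum_\rho\big(\frac{1}{\lambda_\rho}+\frac{p}{\lambda+t(p)}\big)^{-2}$, one has $(\lambda+t(p))^2>p\,\gamma(p)$ and $$t'(p)=-\frac{(\lambda+t)\,\gamma}{(\lambda+t)^2-p\gamma}<0.$$ (iii) Let $c_\rho>0$ and define $$E_\rho(p)=\frac{c_\rho}{\lambda_\rho}\Big(\frac{1}{\lambda_\rho}+\frac{p}{\lambda+t(p)}\Big)^{-2}\Big(1-\frac{p\gamma(p)}{(\lambda+t(p))^2}\Big)^{-1}.$$ If $\lambda_\gamma>\lambda_\rho$, then for all $p>0$, $$\frac{d}{dp}\log E_\rho(p)>\frac{d}{dp}\log E_\gamma(p).$$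
   Context: This concerns the theoretical mode-error learning curves of kernel ridge regression with ridge parameter $\lambda$ and kernel eigenvalues $\lambda_\rho$. In the application, $c_\rho=\langle\overline{w}_\rho^2\rangle$ is the second moment of the target's $\rho$-th feature coefficient. The index $\gamma$ in part (iii) is a mode label and should not be confused with the function $\gamma(p)$. *)

theory Defs
  imports "HOL-Analysis.Analysis"
begin

definition rhs :: "(nat \<Rightarrow> real) \<Rightarrow> nat \<Rightarrow> real \<Rightarrow> real \<Rightarrow> real \<Rightarrow> real" where
  "rhs ls M lam p t = (\<Sum>\<rho>=1..M. inverse (1 / ls \<rho> + p / (lam + t)))"

definition tsol :: "(nat \<Rightarrow> real) \<Rightarrow> nat \<Rightarrow> real \<Rightarrow> real \<Rightarrow> real" where
  "tsol ls M lam p = (THE t. t > 0 \<and> t = rhs ls M lam p t)"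

definition gam :: "(nat \<Rightarrow> real) \<Rightarrow> nat \<Rightarrow> real \<Rightarrow> real \<Rightarrow> real" where
  "gam ls M lam p = (\<Sum>\<rho>=1..M. (inverse (1 / ls \<rho> + p / (lam + tsol ls M lam p))) ^ 2)"

definition Emode :: "(nat \<Rightarrow> real) \<Rightarrow> nat \<Rightarrow> real \<Rightarrow> (nat \<Rightarrow> real) \<Rightarrow> nat \<Rightarrow> real \<Rightarrow> real" where
  "Emode ls M lam c \<rho> p =
     c \<rho> / ls \<rho> * (inverse (1 / ls \<rho> + p / (lam + tsol ls M lam p))) ^ 2
       * inverse (1 - p * gam ls M lam p / (lam + tsol ls M lam p) ^ 2)"

end

theory Submission imports Defs begin

text \<open>Write \<open>w\<^sub>\<rho>(p, t) = (1/\<lambda>\<^sub>\<rho> + p/(\<lambda> + t))\<^sup>-\<^sup>1\<close>. The right-hand side is positive and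
  bounded by \<open>\<Sum>\<lambda>\<^sub>\<rho>\<close>, so a positive fixed point exists by the intermediate value theorem.
  Subtracting the fixed-point equations at \<open>(p, t)\<close> and \<open>(q, s)\<close> gives
  \<open>(t - s)((\<lambda> + t)(\<lambda> + s) - p P) = (q - p)(\<lambda> + t) P\<close> with
  \<open>P = \<Sum> w\<^sub>\<rho>(p, t) w\<^sub>\<rho>(q, s)\<close>, and \<open>p w\<^sub>\<rho>(p, t) \<le> \<lambda> + t\<close> bounds the bracket below by
  \<open>\<lambda>(\<lambda> + t) > 0\<close>. This one identity yields uniqueness, a Lipschitz bound and, as
  \<open>q \<rightarrow> p\<close>, the derivative \<open>t'(p) < 0\<close>; hence \<open>p/(\<lambda> + t(p))\<close> is strictly increasing.
  In \<open>log E\<^sub>\<rho>\<close> only \<open>-2 log (1/\<lambda>\<^sub>\<rho> + p/(\<lambda> + t))\<close> depends on both \<open>\<rho>\<close> and \<open>p\<close>; its derivative is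
  more negative for the larger eigenvalue.\<close>

context
  fixes ls :: "nat \<Rightarrow> real" and M :: nat and lam :: real
  assumes lam_pos: "lam > 0" and ls_pos: "\<forall>\<rho>\<in>{1..M}. ls \<rho> > 0"
begin

abbreviation weight :: "nat \<Rightarrow> real \<Rightarrow> real \<Rightarrow> real" where
  "weight \<rho> p t \<equiv> inverse (1 / ls \<rho> + p / (lam + t))"

abbreviation cross :: "real \<Rightarrow> real \<Rightarrow> real \<Rightarrow> real \<Rightarrow> real" where
  "cross p t q s \<equiv> \<Sum>\<rho>=1..M. weight \<rho> p t * weight \<rho> q s"

lemma weight_denom_pos:
  assumes "p \<ge> 0" "t \<ge> 0" "\<rho> \<in> {1..M}"
  shows "1 / ls \<rho> + p / (lam + t) > 0"
  using assms lam_pos ls_pos by (simp add: add_pos_nonneg)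

lemma weight_pos: "p \<ge> 0 \<Longrightarrow> t \<ge> 0 \<Longrightarrow> \<rho> \<in> {1..M} \<Longrightarrow> weight \<rho> p t > 0"
  using weight_denom_pos by simp

lemma weight_le_ls:
  assumes "p \<ge> 0" "t \<ge> 0" "\<rho> \<in> {1..M}"
  shows "weight \<rho> p t \<le> ls \<rho>"
proof -
  have "inverse (1 / ls \<rho> + p / (lam + t)) \<le> inverse (1 / ls \<rho>)"
    using assms lam_pos ls_pos by (intro le_imp_inverse_le) auto
  then show ?thesis by simp
qed

lemma mult_weight_le:
  assumes "p \<ge> 0" "t \<ge> 0" "\<rho> \<in> {1..M}"
  shows "p * weight \<rho> p t \<le> lam + t"
proof -
  have "ls \<rho> > 0" "lam + t > 0"
    using assms lam_pos ls_pos by auto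
  then have "p \<le> (lam + t) * (1 / ls \<rho> + p / (lam + t))"
    by (simp add: distrib_left)
  then show ?thesis
    using weight_denom_pos[OF assms] by (simp add: divide_simps mult.commute)
qed

lemma cross_nonneg: "p \<ge> 0 \<Longrightarrow> t \<ge> 0 \<Longrightarrow> q \<ge> 0 \<Longrightarrow> s \<ge> 0 \<Longrightarrow> cross p t q s \<ge> 0"
  using weight_pos by (intro sum_nonneg) (simp add: less_imp_le)

lemma cross_le:
  "p \<ge> 0 \<Longrightarrow> t \<ge> 0 \<Longrightarrow> q \<ge> 0 \<Longrightarrow> s \<ge> 0 \<Longrightarrow> cross p t q s \<le> (\<Sum>\<rho>=1..M. ls \<rho> ^ 2)"
  unfolding power2_eq_square
  using weight_le_ls weight_pos ls_pos by (intro sum_mono mult_mono) (auto intro: less_imp_le)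

lemma rhs_pos: "M \<ge> 1 \<Longrightarrow> p \<ge> 0 \<Longrightarrow> t \<ge> 0 \<Longrightarrow> rhs ls M lam p t > 0"
  unfolding rhs_def using weight_pos by (intro sum_pos) auto

lemma rhs_le_sum: "p \<ge> 0 \<Longrightarrow> t \<ge> 0 \<Longrightarrow> rhs ls M lam p t \<le> (\<Sum>\<rho>=1..M. ls \<rho>)"
  unfolding rhs_def using weight_le_ls by (intro sum_mono) auto

lemma solution_difference:
  assumes p: "p \<ge> 0" and q: "q \<ge> 0" and t: "t \<ge> 0" and s: "s \<ge> 0"
    and t_eq: "t = rhs ls M lam p t" and s_eq: "s = rhs ls M lam q s"
  shows "(t - s) * ((lam + t) * (lam + s) - p * cross p t q s) = (q - p) * (lam + t) * cross p t q s"
proof -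
  have term_diff: "weight \<rho> p t - weight \<rho> q s
      = weight \<rho> p t * weight \<rho> q s * (q / (lam + s) - p / (lam + t))"
    if "\<rho> \<in> {1..M}" for \<rho>
    using weight_denom_pos[OF p t that] weight_denom_pos[OF q s that]
    by (simp add: inverse_diff_inverse algebra_simps)
  have "t - s = (\<Sum>\<rho>=1..M. weight \<rho> p t - weight \<rho> q s)"
    using t_eq s_eq by (simp add: rhs_def sum_subtractf)
  also have "\<dots> = (q / (lam + s) - p / (lam + t)) * cross p t q s"
    unfolding sum_distrib_left by (intro sum.cong) (auto simp: term_diff mult_ac)
  finally have diff: "t - s = (q / (lam + s) - p / (lam + t)) * cross p t q s" .
  have denoms: "(q / (lam + s) - p / (lam + t)) * ((lam + t) * (lam + s)) = q * (lam + t) - p * (lam + s)"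
  proof -
    have "lam + s \<noteq> 0" "lam + t \<noteq> 0"
      using lam_pos s t by auto
    then have "q / (lam + s) * ((lam + t) * (lam + s)) = q * (lam + t)"
      "p / (lam + t) * ((lam + t) * (lam + s)) = p * (lam + s)"
      by simp_all
    then show ?thesis
      by (simp add: left_diff_distrib)
  qed
  have "(t - s) * ((lam + t) * (lam + s))
      = (q / (lam + s) - p / (lam + t)) * ((lam + t) * (lam + s)) * cross p t q s"
    unfolding diff by (simp only: mult_ac)
  also have "\<dots> = (q * (lam + t) - p * (lam + s)) * cross p t q s"
    unfolding denoms ..
  finally show ?thesis
    by (simp add: algebra_simps)
qed

lemma solution_gap_ge:
  assumes "p \<ge> 0" "t \<ge> 0" "q \<ge> 0" "s \<ge> 0" and s_eq: "s = rhs ls M lam q s"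
  shows "lam * (lam + t) \<le> (lam + t) * (lam + s) - p * cross p t q s"
proof -
  have "p * cross p t q s = (\<Sum>\<rho>=1..M. (p * weight \<rho> p t) * weight \<rho> q s)"
    by (simp add: sum_distrib_left mult.assoc)
  also have "\<dots> \<le> (\<Sum>\<rho>=1..M. (lam + t) * weight \<rho> q s)"
    using assms mult_weight_le weight_pos
    by (intro sum_mono mult_right_mono) (auto intro: less_imp_le)
  also have "\<dots> = (lam + t) * s"
    using s_eq unfolding rhs_def by (metis sum_distrib_left)
  finally show ?thesis
    by (simp add: algebra_simps)
qed

lemma gam_eq_cross: "gam ls M lam p = cross p (tsol ls M lam p) p (tsol ls M lam p)"
  unfolding gam_def power2_eq_square ..

context
  assumes M_ge_1: "M \<ge> 1"
begin

lemma fixed_point_exists: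
  assumes p: "p \<ge> 0"
  shows "\<exists>t>0. t = rhs ls M lam p t"
proof -
  define L where "L = (\<Sum>\<rho>=1..M. ls \<rho>)"
  have "L \<ge> 0"
    unfolding L_def using ls_pos by (intro sum_nonneg) (auto intro: less_imp_le)
  moreover have "continuous_on {0..L} (\<lambda>t. t - rhs ls M lam p t)"
    unfolding rhs_def using lam_pos weight_denom_pos[OF p]
    by (intro continuous_intros) (auto, metis less_irrefl)
  ultimately obtain t where t: "0 \<le> t" "t - rhs ls M lam p t = 0"
    using IVT'[of "\<lambda>t. t - rhs ls M lam p t" 0 0 L] rhs_pos[OF M_ge_1 p, of 0] rhs_le_sum[OF p, of L]
    unfolding L_def by auto
  moreover have "t \<noteq> 0"
    using t rhs_pos[OF M_ge_1 p, of 0] by auto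
  ultimately show ?thesis
    by (intro exI[of _ t]) auto
qed

lemma fixed_point_unique:
  assumes p: "p \<ge> 0"
  shows "\<exists>!t. t > 0 \<and> t = rhs ls M lam p t"
proof (rule ex_ex1I)
  show "\<exists>t. t > 0 \<and> t = rhs ls M lam p t"
    using fixed_point_exists[OF p] by blast
next
  fix t s
  assume t: "t > 0 \<and> t = rhs ls M lam p t" and s: "s > 0 \<and> s = rhs ls M lam p s"
  then have "(t - s) * ((lam + t) * (lam + s) - p * cross p t p s) = 0"
    using solution_difference[OF p p, of t s] by auto
  moreover have "lam * (lam + t) \<le> (lam + t) * (lam + s) - p * cross p t p s"
    using solution_gap_ge[OF p _ p, of t s] t s by auto
  moreover have "lam * (lam + t) > 0"
    using lam_pos t by auto
  ultimately show "t = s"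
    by auto
qed

lemma tsol_pos: "p \<ge> 0 \<Longrightarrow> tsol ls M lam p > 0"
  and tsol_fixed_point: "p \<ge> 0 \<Longrightarrow> tsol ls M lam p = rhs ls M lam p (tsol ls M lam p)"
  unfolding tsol_def using theI'[OF fixed_point_unique] by blast+

lemma tsol_lipschitz:
  assumes p: "p \<ge> 0" and q: "q \<ge> 0"
  shows "\<bar>tsol ls M lam q - tsol ls M lam p\<bar> \<le> \<bar>q - p\<bar> * ((\<Sum>\<rho>=1..M. ls \<rho> ^ 2) / lam)"
proof -
  define t s where "t = tsol ls M lam p" and "s = tsol ls M lam q"
  define P X where "P = cross p t q s" and "X = (lam + t) * (lam + s) - p * P"
  have t: "t > 0" "t = rhs ls M lam p t" and s: "s > 0" "s = rhs ls M lam q s"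
    unfolding t_def s_def using tsol_pos tsol_fixed_point p q by auto
  have P: "0 \<le> P" "P \<le> (\<Sum>\<rho>=1..M. ls \<rho> ^ 2)"
    unfolding P_def using cross_nonneg cross_le p q t s by auto
  have X: "lam * (lam + t) \<le> X"
    unfolding X_def P_def using solution_gap_ge p q t s by auto
  have u: "lam + t > 0"
    using lam_pos t by auto
  then have "X \<ge> 0"
    using X lam_pos by (smt (verit) mult_pos_pos)
  moreover have "(t - s) * X = (q - p) * (lam + t) * P"
    unfolding X_def P_def using solution_difference p q t s by (simp add: less_imp_le)
  then have "\<bar>t - s\<bar> * \<bar>X\<bar> = \<bar>q - p\<bar> * \<bar>lam + t\<bar> * \<bar>P\<bar>"
    by (metis abs_mult)
  ultimately have "\<bar>t - s\<bar> * X = \<bar>q - p\<bar> * (lam + t) * P"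
    using u P by simp
  define C where "C = (\<Sum>\<rho>=1..M. ls \<rho> ^ 2)"
  have "(\<bar>t - s\<bar> * lam) * (lam + t) = \<bar>t - s\<bar> * (lam * (lam + t))"
    by (simp add: mult_ac)
  also have "\<dots> \<le> \<bar>t - s\<bar> * X"
    using X by (intro mult_left_mono) auto
  also have "\<dots> = \<bar>q - p\<bar> * (lam + t) * P"
    by fact
  also have "\<dots> \<le> \<bar>q - p\<bar> * (lam + t) * C"
    using P u unfolding C_def by (intro mult_left_mono) auto
  also have "\<dots> = (\<bar>q - p\<bar> * C) * (lam + t)"
    by (simp add: mult_ac)
  finally have "\<bar>t - s\<bar> * lam \<le> \<bar>q - p\<bar> * C"
    using u by (rule mult_right_le_imp_le)
  then show ?thesis
    unfolding t_def s_def C_def using lam_pos by (simp add: pos_le_divide_eq abs_minus_commute)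
qed

lemma tsol_tendsto:
  assumes p: "p \<ge> 0"
  shows "(tsol ls M lam \<longlongrightarrow> tsol ls M lam p) (at p within {0..})"
proof -
  define C where "C = (\<Sum>\<rho>=1..M. ls \<rho> ^ 2) / lam"
  have bound: "\<forall>\<^sub>F x in at p within {0..}. norm (tsol ls M lam x - tsol ls M lam p) \<le> \<bar>x - p\<bar> * C"
    unfolding eventually_at_filter C_def using tsol_lipschitz[OF p] by (auto intro!: always_eventually)
  have "((\<lambda>x. \<bar>x - p\<bar> * C) \<longlongrightarrow> \<bar>p - p\<bar> * C) (at p within {0..})"
    by (intro tendsto_intros)
  then have "((\<lambda>x. \<bar>x - p\<bar> * C) \<longlongrightarrow> 0) (at p within {0..})"
    by simp
  from Lim_null_comparison[OF bound this] show ?thesis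
    by (simp add: LIM_zero_iff)
qed

lemma tsol_gap_ge:
  assumes "p \<ge> 0"
  shows "lam * (lam + tsol ls M lam p) \<le> (lam + tsol ls M lam p) ^ 2 - p * gam ls M lam p"
  using solution_gap_ge[of p "tsol ls M lam p" p "tsol ls M lam p"]
    tsol_pos[OF assms] tsol_fixed_point[OF assms] assms
  by (simp add: gam_eq_cross power2_eq_square)

lemma tsol_gap_pos: "p \<ge> 0 \<Longrightarrow> p * gam ls M lam p < (lam + tsol ls M lam p) ^ 2"
  using tsol_gap_ge[of p] tsol_pos[of p] lam_pos
  by (smt (verit) mult_pos_pos)

lemma gam_pos:
  assumes "p \<ge> 0"
  shows "gam ls M lam p > 0"
proof -
  have "weight \<rho> p (tsol ls M lam p) > 0" if "\<rho> \<in> {1..M}" for \<rho>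
    using weight_pos[OF assms _ that] tsol_pos[OF assms] by simp
  then show ?thesis
    unfolding gam_def using M_ge_1 by (intro sum_pos zero_less_power) auto
qed

lemma tsol_difference_quotient:
  assumes p: "p \<ge> 0" and y: "y \<ge> 0" "y \<noteq> p"
  defines "t \<equiv> tsol ls M lam p" and "P \<equiv> cross p (tsol ls M lam p) y (tsol ls M lam y)"
  shows "(tsol ls M lam y - t) / (y - p) = - (lam + t) * P / ((lam + t) * (lam + tsol ls M lam y) - p * P)"
proof -
  have t: "t > 0"
    unfolding t_def using tsol_pos p by auto
  have "(t - tsol ls M lam y) * ((lam + t) * (lam + tsol ls M lam y) - p * P) = (y - p) * (lam + t) * P"
    unfolding t_def P_def using solution_difference p y tsol_pos tsol_fixed_point by (simp add: less_imp_le)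
  moreover have "lam * (lam + t) \<le> (lam + t) * (lam + tsol ls M lam y) - p * P"
    unfolding t_def P_def using solution_gap_ge p y tsol_pos tsol_fixed_point by (simp add: less_imp_le)
  then have "(lam + t) * (lam + tsol ls M lam y) - p * P > 0"
    using lam_pos t by (smt (verit) mult_pos_pos)
  ultimately show ?thesis
    using y by (simp add: field_simps)
qed

lemma tsol_has_derivative:
  assumes p: "p \<ge> 0"
  shows "(tsol ls M lam has_real_derivative
           - (lam + tsol ls M lam p) * gam ls M lam p
             / ((lam + tsol ls M lam p) ^ 2 - p * gam ls M lam p)) (at p within {0..})"
proof -
  define t where "t = tsol ls M lam p"
  define P where "P y = cross p t y (tsol ls M lam y)" for y
  have t: "t > 0"
    unfolding t_def using tsol_pos p by auto
  have "((\<lambda>y. weight \<rho> y (tsol ls M lam y)) \<longlongrightarrow> weight \<rho> p t) (at p within {0..})"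
    if "\<rho> \<in> {1..M}" for \<rho>
    using weight_denom_pos[OF p _ that, of t] lam_pos t unfolding t_def
    by (intro tendsto_intros tsol_tendsto[OF p]) auto
  then have "(P \<longlongrightarrow> P p) (at p within {0..})"
    unfolding P_def t_def by (intro tendsto_sum tendsto_mult_left) auto
  moreover have "(lam + t) * (lam + t) - p * P p > 0"
    using tsol_gap_pos[OF p] unfolding P_def t_def gam_eq_cross power2_eq_square by simp
  ultimately have "((\<lambda>y. - (lam + t) * P y / ((lam + t) * (lam + tsol ls M lam y) - p * P y))
      \<longlongrightarrow> - (lam + t) * P p / ((lam + t) * (lam + t) - p * P p)) (at p within {0..})"
    unfolding t_def by (intro tendsto_intros tsol_tendsto[OF p]) auto
  moreover have "\<forall>\<^sub>F y in at p within {0..}.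
      - (lam + t) * P y / ((lam + t) * (lam + tsol ls M lam y) - p * P y) = (tsol ls M lam y - t) / (y - p)"
    unfolding eventually_at_filter P_def t_def
    by (intro always_eventually allI impI) (simp add: tsol_difference_quotient[OF p])
  ultimately show ?thesis
    unfolding has_field_derivative_iff P_def t_def gam_eq_cross power2_eq_square
    by (simp add: tendsto_cong)
qed

lemma tsol_derivative_neg:
  assumes "p \<ge> 0"
  shows "- (lam + tsol ls M lam p) * gam ls M lam p / ((lam + tsol ls M lam p) ^ 2 - p * gam ls M lam p) < 0"
proof (rule divide_neg_pos)
  show "- (lam + tsol ls M lam p) * gam ls M lam p < 0"
    using tsol_pos[OF assms] gam_pos[OF assms] lam_pos by (intro mult_neg_pos) auto
  show "(lam + tsol ls M lam p) ^ 2 - p * gam ls M lam p > 0"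
    using tsol_gap_pos[OF assms] by simp
qed

lemma tsol_has_derivative_at:
  assumes "p > 0"
  shows "(tsol ls M lam has_real_derivative
           - (lam + tsol ls M lam p) * gam ls M lam p
             / ((lam + tsol ls M lam p) ^ 2 - p * gam ls M lam p)) (at p)"
  using tsol_has_derivative[of p] at_within_interior[of p "{0..}"] assms by simp

lemma ratio_has_pos_derivative:
  assumes p: "p > 0"
  shows "\<exists>Q > 0. ((\<lambda>q. q / (lam + tsol ls M lam q)) has_real_derivative Q) (at p)"
proof -
  define D where "D = - (lam + tsol ls M lam p) * gam ls M lam p
                        / ((lam + tsol ls M lam p) ^ 2 - p * gam ls M lam p)"
  have u: "lam + tsol ls M lam p > 0"
    using tsol_pos[of p] lam_pos p by simp
  have "((\<lambda>q. q / (lam + tsol ls M lam q)) has_real_derivative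
      (1 * (lam + tsol ls M lam p) - p * (0 + D)) / ((lam + tsol ls M lam p) * (lam + tsol ls M lam p))) (at p)"
    using tsol_has_derivative_at[OF p] u unfolding D_def
    by (intro DERIV_divide DERIV_ident DERIV_add DERIV_const) auto
  moreover have "p * D < 0"
    unfolding D_def using tsol_derivative_neg[of p] p by (intro mult_pos_neg) auto
  then have "(1 * (lam + tsol ls M lam p) - p * (0 + D)) / ((lam + tsol ls M lam p) * (lam + tsol ls M lam p)) > 0"
    using u by (intro divide_pos_pos) auto
  ultimately show ?thesis
    by blast
qed

lemma log_correction_differentiable:
  assumes p: "p > 0"
  shows "\<exists>K. ((\<lambda>q. ln (inverse (1 - q * gam ls M lam q / (lam + tsol ls M lam q) ^ 2)))
           has_real_derivative K) (at p)"
proof -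
  have p0: "p \<ge> 0"
    using p by simp
  have u: "lam + tsol ls M lam p > 0"
    using tsol_pos[OF p0] lam_pos by simp
  have "tsol ls M lam differentiable (at p)"
    using tsol_has_derivative_at[OF p] real_differentiable_def by blast
  moreover have "1 / ls \<rho> + p / (lam + tsol ls M lam p) \<noteq> 0" if "\<rho> \<in> {1..M}" for \<rho>
    using weight_denom_pos[OF p0 less_imp_le[OF tsol_pos[OF p0]] that] by simp
  ultimately have "(\<lambda>q. 1 - q * gam ls M lam q / (lam + tsol ls M lam q) ^ 2) differentiable (at p)"
    unfolding gam_def using u by (intro derivative_intros) auto
  then obtain B' where B': "((\<lambda>q. 1 - q * gam ls M lam q / (lam + tsol ls M lam q) ^ 2)
      has_real_derivative B') (at p)"
    using real_differentiable_def by blast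
  have B_pos: "1 - p * gam ls M lam p / (lam + tsol ls M lam p) ^ 2 > 0"
    using tsol_gap_pos[OF p0] u by (simp add: pos_divide_less_eq)
  show ?thesis
    using DERIV_chain2[OF DERIV_ln_divide DERIV_inverse_fun[OF B']] B_pos
    by (metis positive_imp_inverse_positive less_irrefl)
qed

lemma ln_Emode_eq:
  assumes q: "q \<ge> 0" and r: "r \<in> {1..M}" and c: "c r > 0"
  shows "ln (Emode ls M lam c r q)
    = ln (c r / ls r) - 2 * ln (1 / ls r + q / (lam + tsol ls M lam q))
      + ln (inverse (1 - q * gam ls M lam q / (lam + tsol ls M lam q) ^ 2))"
proof -
  have a: "1 / ls r + q / (lam + tsol ls M lam q) > 0"
    using weight_denom_pos[OF q less_imp_le[OF tsol_pos[OF q]] r] .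
  have "(lam + tsol ls M lam q) ^ 2 > 0"
    using tsol_pos[OF q] lam_pos by simp
  then have B: "inverse (1 - q * gam ls M lam q / (lam + tsol ls M lam q) ^ 2) > 0"
    using tsol_gap_pos[OF q] by (simp add: pos_divide_less_eq)
  have cl: "c r / ls r > 0"
    using c ls_pos r by simp
  have w: "(inverse (1 / ls r + q / (lam + tsol ls M lam q))) ^ 2 > 0"
    using a by simp
  have "ln (inverse (1 / ls r + q / (lam + tsol ls M lam q)) ^ 2)
      = - 2 * ln (1 / ls r + q / (lam + tsol ls M lam q))"
    using a by (simp add: ln_realpow ln_inverse)
  then show ?thesis
    unfolding Emode_def by (simp only: ln_mult_pos[OF mult_pos_pos[OF cl w] B] ln_mult_pos[OF cl w])
qed

lemma ln_Emode_has_derivative: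
  assumes p: "p > 0" and r: "r \<in> {1..M}" and c: "c r > 0"
    and Q: "((\<lambda>q. q / (lam + tsol ls M lam q)) has_real_derivative Q) (at p)"
    and K: "((\<lambda>q. ln (inverse (1 - q * gam ls M lam q / (lam + tsol ls M lam q) ^ 2)))
              has_real_derivative K) (at p)"
  shows "((\<lambda>q. ln (Emode ls M lam c r q)) has_real_derivative
           K - 2 * Q / (1 / ls r + p / (lam + tsol ls M lam p))) (at p)"
proof -
  have a: "1 / ls r + p / (lam + tsol ls M lam p) > 0"
    using weight_denom_pos[OF _ less_imp_le[OF tsol_pos] r] p by simp
  have "((\<lambda>q. ln (c r / ls r) - 2 * ln (1 / ls r + q / (lam + tsol ls M lam q))
      + ln (inverse (1 - q * gam ls M lam q / (lam + tsol ls M lam q) ^ 2)))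
      has_real_derivative K - 2 * Q / (1 / ls r + p / (lam + tsol ls M lam p))) (at p)"
    using DERIV_add[OF DERIV_diff[OF DERIV_const[of "ln (c r / ls r)"] DERIV_cmult[where c = 2, OF
        DERIV_chain2[OF DERIV_ln_divide[OF a] DERIV_add[OF DERIV_const[of "1 / ls r"] Q]]]] K]
    by (rule DERIV_cong) simp
  then show ?thesis
    by (rule has_field_derivative_transform_within_open[where S = "{0<..}"])
      (use p r c ln_Emode_eq in auto)
qed

lemma ln_Emode_derivative_gt:
  assumes p: "p > 0" and \<rho>: "\<rho> \<in> {1..M}" and g: "g \<in> {1..M}"
    and c: "c \<rho> > 0" "c g > 0" and ls_less: "ls \<rho> < ls g"
  shows "\<exists>D1 D2. ((\<lambda>q. ln (Emode ls M lam c \<rho> q)) has_real_derivative D1) (at p)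
              \<and> ((\<lambda>q. ln (Emode ls M lam c g q)) has_real_derivative D2) (at p)
              \<and> D1 > D2"
proof -
  obtain Q where "Q > 0" and Q: "((\<lambda>q. q / (lam + tsol ls M lam q)) has_real_derivative Q) (at p)"
    using ratio_has_pos_derivative[OF p] by blast
  obtain K where K: "((\<lambda>q. ln (inverse (1 - q * gam ls M lam q / (lam + tsol ls M lam q) ^ 2)))
      has_real_derivative K) (at p)"
    using log_correction_differentiable[OF p] by blast
  have "1 / ls g + p / (lam + tsol ls M lam p) > 0"
    using weight_denom_pos[OF _ less_imp_le[OF tsol_pos] g] p by simp
  moreover have "1 / ls g < 1 / ls \<rho>"
    using ls_less ls_pos \<rho> by (simp add: frac_less2)
  ultimately have "Q / (1 / ls \<rho> + p / (lam + tsol ls M lam p)) < Q / (1 / ls g + p / (lam + tsol ls M lam p))"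
    using \<open>Q > 0\<close> by (intro divide_strict_left_mono) (auto intro: mult_pos_pos)
  then have "K - 2 * Q / (1 / ls \<rho> + p / (lam + tsol ls M lam p))
      > K - 2 * Q / (1 / ls g + p / (lam + tsol ls M lam p))"
    by simp
  with ln_Emode_has_derivative[where c = c, OF p \<rho> c(1) Q K]
    ln_Emode_has_derivative[where c = c, OF p g c(2) Q K]
  show ?thesis
    by blast
qed

end

end

theorem mainTheorem4:
  fixes ls c :: "nat \<Rightarrow> real" and M :: nat and lam :: real
  assumes "M \<ge> 1"
    and "lam > 0"
    and "\<forall>\<rho>\<in>{1..M}. ls \<rho> > 0"
  shows
    "(\<forall>p\<ge>0. (\<exists>!t. t > 0 \<and> t = rhs ls M lam p t)
             \<and> tsol ls M lam differentiable (at p within {0..}))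
   \<and> (\<forall>p\<ge>0. (lam + tsol ls M lam p) ^ 2 > p * gam ls M lam p
             \<and> (tsol ls M lam has_real_derivative
                  (- (lam + tsol ls M lam p) * gam ls M lam p
                     / ((lam + tsol ls M lam p) ^ 2 - p * gam ls M lam p))) (at p within {0..})
             \<and> - (lam + tsol ls M lam p) * gam ls M lam p
                     / ((lam + tsol ls M lam p) ^ 2 - p * gam ls M lam p) < 0)
   \<and> (\<forall>\<rho>\<in>{1..M}. \<forall>g\<in>{1..M}.
         c \<rho> > 0 \<longrightarrow> c g > 0 \<longrightarrow> ls g > ls \<rho> \<longrightarrow>
         (\<forall>p>0. \<exists>D1 D2.
             ((\<lambda>q. ln (Emode ls M lam c \<rho> q)) has_real_derivative D1) (at p)
           \<and> ((\<lambda>q. ln (Emode ls M lam c g q)) has_real_derivative D2) (at p)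
           \<and> D1 > D2))"
proof -
  note setting = assms(2,3,1)
  have "tsol ls M lam differentiable (at p within {0..})" if "p \<ge> 0" for p
    using tsol_has_derivative[OF setting that] real_differentiable_def by blast
  then show ?thesis
    using fixed_point_unique[OF setting] tsol_gap_pos[OF setting] tsol_has_derivative[OF setting]
      tsol_derivative_neg[OF setting] ln_Emode_derivative_gt[OF setting]
    by simp
qed

end
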